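(* There is an absolute constant $C>0$ such that the following holds. Let $\varepsilon=\varepsilon(n)$ satisfy $\varepsilon\le 1$ and $n\varepsilon(n)\to\infty$ (i.e. $\varepsilon\in[\omega(1/n),1]$). Then for all sufficiently large $n$, in the variable-processor cup game on $n$ cups with $\varepsilon$ resource augmentation, the greedy emptying algorithm guarantees, against every filler and at every time, backlog at most $C\varepsilon^{-1}\log n$.
   Context: The variable-processor cup game with $\varepsilon$ resource augmentation on $n$ cups: there are $n$ cups with real fills $x_1,\dots,x_n$, all initially $0$, and two adaptive players, a filler and an emptier. In each round the filler chooses an integer $1\le p\le n$ and reals $a_1,\dots,a_n\in[0,1]$ with $\sum_i a_i=p$ and replaces each $x_i$ by $x_i+a_i$; then the emptier chooses a set $S$ of exactly $p$ cups and replaces $x_i$ by $\max(0,x_i-(1+\varepsilon))$ for each $i\in S$ (fills never go below $0$). The backlog is $\max_i x_i$. The greedy emptier chooses $S$ to be $p$ cups of largest fill after the filler's move. *)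

theory Defs
  imports Complex_Main
begin

text \<open>Variable-processor cup game on cups 0..n-1. A state is a fill vector nat => real
  (only indices below n matter).\<close>

definition valid_fill :: "nat \<Rightarrow> nat \<Rightarrow> (nat \<Rightarrow> real) \<Rightarrow> bool" where
  "valid_fill n p a \<longleftrightarrow> 1 \<le> p \<and> p \<le> n \<and> (\<forall>i<n. 0 \<le> a i \<and> a i \<le> 1) \<and> (\<Sum>i<n. a i) = real p"

definition greedy_set :: "nat \<Rightarrow> (nat \<Rightarrow> real) \<Rightarrow> nat \<Rightarrow> nat set \<Rightarrow> bool" where
  "greedy_set n y p S \<longleftrightarrow> S \<subseteq> {..<n} \<and> card S = p \<and> (\<forall>i\<in>S. \<forall>j\<in>{..<n} - S. y j \<le> y i)"

text \<open>x t is the fill vector after t rounds of play between an arbitrary (adaptive) filler and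
  the greedy emptier with eps resource augmentation (ties broken arbitrarily).\<close>
definition greedy_play :: "nat \<Rightarrow> real \<Rightarrow> (nat \<Rightarrow> nat \<Rightarrow> real) \<Rightarrow> bool" where
  "greedy_play n eps x \<longleftrightarrow>
     (\<forall>i<n. x 0 i = 0) \<and>
     (\<forall>t. \<exists>p a S. valid_fill n p a \<and> greedy_set n (\<lambda>i. x t i + a i) p S \<and>
        (\<forall>i<n. x (Suc t) i =
           (if i \<in> S then max 0 (x t i + a i - (1 + eps)) else x t i + a i)))"

end

theory Submission
  imports Defs
begin

text \<open>Track the potential \<Phi> = \<Sum>_i exp(\<epsilon> x_i / 4). In a round in which every emptied cup
  holds at least 1 + \<epsilon> after filling, greedy emptying cannot increase \<Phi>: the emptied cups are
  the fullest ones, so the water that the filler pours into the other cups is worth less in \<Phi>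
  than what the emptier removes. In any other round some emptied cup holds less than 1 + \<epsilon>,
  so every cup that is not emptied holds at most 2, while every emptied cup ends empty or at
  least \<epsilon> lower than before the round; hence \<Phi>' \<le> 3n + exp(-\<epsilon>^2/4) \<Phi>. Either way the
  bound \<Phi> \<le> 24 n / \<epsilon>^2 is preserved. Once n \<epsilon> \<ge> 1 this gives exp(\<epsilon> x_i / 4) \<le> n^6, i.e.
  a backlog of at most 24 ln n / \<epsilon>.\<close>

definition exp_potential :: "real \<Rightarrow> nat \<Rightarrow> (nat \<Rightarrow> real) \<Rightarrow> real" where
  "exp_potential l n x = (\<Sum>i<n. exp (l * x i))"

lemma exp_decrease_lower_bound:
  fixes l e a :: real
  assumes l: "0 \<le> l" "l * (1 + e) \<le> e / 2" and e: "0 \<le> e" "e \<le> 1" and a: "0 \<le> a" "a \<le> 1"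
  shows "l * (1 - a) \<le> exp (- l * a) - exp (- l * (1 + e))"
proof -
  have "exp (- l * a) = exp (- l * (1 + e)) * exp (l * (1 + e - a))"
    by (simp add: exp_add[symmetric] algebra_simps)
  also have "\<dots> \<ge> exp (- l * (1 + e)) * (1 + l * (1 + e - a))"
    by (intro mult_left_mono) (auto simp: add.commute)
  finally have "exp (- l * (1 + e)) * (l * (1 + e - a)) \<le> exp (- l * a) - exp (- l * (1 + e))"
    by (simp add: algebra_simps)
  moreover have "(1 - e / 2) * (l * (1 + e - a)) \<le> exp (- l * (1 + e)) * (l * (1 + e - a))"
  proof (rule mult_right_mono)
    show "1 - e / 2 \<le> exp (- l * (1 + e))"
      using exp_minus_ge[of "l * (1 + e)"] l by simp
  qed (use l e a in auto)
  moreover have "(e / 2) * (1 + e - a) \<le> (e / 2) * 2"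
    using e a by (intro mult_left_mono) auto
  then have "l * (1 - a) \<le> (1 - e / 2) * (l * (1 + e - a))"
    using mult_left_mono[of "1 - a" "(1 - e / 2) * (1 + e - a)" l] l
    by (simp add: algebra_simps)
  ultimately show ?thesis by linarith
qed

lemma half_le_one_minus_exp_minus:
  fixes v :: real
  assumes "0 \<le> v" "v \<le> 1"
  shows "v / 2 \<le> 1 - exp (- v)"
proof -
  have "exp (- v) \<le> 1 / (1 + v)"
    using exp_ge_add_one_self[of v] assms by (simp add: exp_minus field_simps)
  also have "1 / (1 + v) \<le> 1 - v / 2"
    using assms by (simp add: field_simps) (smt (verit) mult_left_le)
  finally show ?thesis by simp
qed

lemma valid_fill_mass_balance:
  assumes "valid_fill n p a" "S \<subseteq> {..<n}" "card S = p"
  shows "(\<Sum>j\<in>{..<n} - S. a j) = (\<Sum>i\<in>S. 1 - a i)"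
proof -
  have "(\<Sum>j<n. a j) = (\<Sum>i\<in>S. a i) + (\<Sum>j\<in>{..<n} - S. a j)"
    using assms(2) by (metis finite_lessThan sum.subset_diff add.commute)
  then show ?thesis
    using assms by (simp add: valid_fill_def sum_subtractf)
qed

lemma greedy_set_threshold:
  assumes "greedy_set n y p S" "1 \<le> p"
  obtains m where "\<forall>i\<in>S. m \<le> y i" "\<forall>j\<in>{..<n} - S. y j \<le> m"
proof
  have S: "S \<subseteq> {..<n}" "S \<noteq> {}" and greedy: "\<forall>i\<in>S. \<forall>j\<in>{..<n} - S. y j \<le> y i"
    using assms by (auto simp: greedy_set_def)
  then have "finite S" using finite_subset by blast
  then show "\<forall>i\<in>S. Min (y ` S) \<le> y i" by simp
  show "\<forall>j\<in>{..<n} - S. y j \<le> Min (y ` S)"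
    using \<open>finite S\<close> S greedy by (subst Min_ge_iff) auto
qed

lemma exp_potential_saturated_round:
  fixes l e :: real
  assumes l: "0 \<le> l" "l * (1 + e) \<le> e / 2" and e: "0 \<le> e" "e \<le> 1"
    and fill: "valid_fill n p a" and greedy: "greedy_set n (\<lambda>i. x i + a i) p S"
    and x': "\<forall>i<n. x' i = (if i \<in> S then max 0 (x i + a i - (1 + e)) else x i + a i)"
    and saturated: "\<forall>i\<in>S. 1 + e \<le> x i + a i"
  shows "exp_potential l n x' \<le> exp_potential l n x"
proof -
  define y where "y i = x i + a i" for i
  have S: "S \<subseteq> {..<n}" "card S = p" and p: "1 \<le> p" and a: "\<forall>i<n. 0 \<le> a i \<and> a i \<le> 1"
    using greedy fill by (auto simp: greedy_set_def valid_fill_def)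
  obtain m where above: "\<forall>i\<in>S. m \<le> y i" and below: "\<forall>j\<in>{..<n} - S. y j \<le> m"
    using greedy_set_threshold[OF greedy p] unfolding y_def by blast
  have gain: "exp (l * x' j) - exp (l * x j) \<le> l * a j * exp (l * m)" if j: "j \<in> {..<n} - S" for j
  proof -
    have "exp (l * y j) * (1 - l * a j) \<le> exp (l * y j) * exp (- (l * a j))"
      using exp_minus_ge[of "l * a j"] by (intro mult_left_mono) auto
    also have "\<dots> = exp (l * x j)"
      by (simp add: y_def exp_add[symmetric] algebra_simps)
    finally have "exp (l * x' j) - exp (l * x j) \<le> l * a j * exp (l * y j)"
      using x' j by (simp add: y_def algebra_simps)
    also have "\<dots> \<le> l * a j * exp (l * m)"
      using below j l a by (intro mult_left_mono) (auto intro: mult_left_mono)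
    finally show ?thesis .
  qed
  have loss: "l * (1 - a i) * exp (l * m) \<le> exp (l * x i) - exp (l * x' i)" if i: "i \<in> S" for i
  proof -
    have "i < n" using S i by auto
    then have emptied: "x' i = y i - (1 + e)" using x' i saturated by (auto simp: y_def)
    have "l * x' i = l * y i + - l * (1 + e)" "l * x i = l * y i + - l * a i"
      unfolding emptied by (simp_all add: y_def algebra_simps)
    then have "exp (l * x i) - exp (l * x' i) = exp (l * y i) * (exp (- l * a i) - exp (- l * (1 + e)))"
      by (simp only: exp_add right_diff_distrib)
    moreover have "l * (1 - a i) * exp (l * m) \<le> l * (1 - a i) * exp (l * y i)"
      using above i l a \<open>i < n\<close> by (intro mult_left_mono) (auto intro: mult_left_mono)
    moreover have "l * (1 - a i) \<le> exp (- l * a i) - exp (- l * (1 + e))"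
      using exp_decrease_lower_bound[OF l e] a \<open>i < n\<close> by simp
    ultimately show ?thesis
      by (smt (verit) exp_gt_zero mult.commute mult_left_mono)
  qed
  have split: "(\<Sum>i<n. f i) = (\<Sum>i\<in>S. f i) + (\<Sum>i\<in>{..<n} - S. f i)" for f :: "nat \<Rightarrow> real"
    using S by (metis finite_lessThan sum.subset_diff add.commute)
  have "exp_potential l n x' - exp_potential l n x
     = (\<Sum>j\<in>{..<n} - S. exp (l * x' j) - exp (l * x j)) - (\<Sum>i\<in>S. exp (l * x i) - exp (l * x' i))"
    using split[of "\<lambda>i. exp (l * x' i)"] split[of "\<lambda>i. exp (l * x i)"]
    by (simp add: exp_potential_def sum_subtractf)
  also have "\<dots> \<le> (\<Sum>j\<in>{..<n} - S. l * a j * exp (l * m)) - (\<Sum>i\<in>S. l * (1 - a i) * exp (l * m))"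
    using gain loss by (intro diff_mono sum_mono) auto
  also have "\<dots> = 0"
    using valid_fill_mass_balance[OF fill S]
    by (simp add: sum_distrib_right[symmetric] sum_distrib_left[symmetric] mult.assoc)
  finally show ?thesis by simp
qed

lemma exp_potential_unsaturated_round:
  fixes l e :: real
  assumes l: "0 \<le> l" and e: "e \<le> 1"
    and fill: "valid_fill n p a" and greedy: "greedy_set n (\<lambda>i. x i + a i) p S"
    and x': "\<forall>i<n. x' i = (if i \<in> S then max 0 (x i + a i - (1 + e)) else x i + a i)"
    and unsaturated: "i\<^sub>0 \<in> S" "x i\<^sub>0 + a i\<^sub>0 < 1 + e"
  shows "exp_potential l n x' \<le> real n * exp (2 * l) + exp (- (l * e)) * exp_potential l n x"
proof -
  have cup: "exp (l * x' i) \<le> exp (2 * l) + exp (- (l * e)) * exp (l * x i)" if i: "i < n" for i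
  proof -
    consider "x' i \<le> 2" | "x' i \<le> x i - e"
    proof (cases "i \<in> S")
      case False
      then have "x i + a i \<le> x i\<^sub>0 + a i\<^sub>0"
        using greedy unsaturated i by (auto simp: greedy_set_def)
      then show ?thesis using that False x' i unsaturated e by auto
    next
      case True
      then show ?thesis
        using that x' i fill e by (cases "x i + a i < 1 + e") (auto simp: valid_fill_def)
    qed
    then show ?thesis
    proof cases
      case 1
      then have "exp (l * x' i) \<le> exp (2 * l)"
        using l by (simp add: mult.commute mult_left_mono)
      then show ?thesis by (smt (verit) exp_gt_zero mult_pos_pos)
    next
      case 2
      then have "l * x' i \<le> - (l * e) + l * x i"
        using mult_left_mono[OF 2 l] by (simp add: algebra_simps)
      then have "exp (l * x' i) \<le> exp (- (l * e)) * exp (l * x i)"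
        by (simp add: exp_add[symmetric])
      then show ?thesis by (smt (verit) exp_gt_zero)
    qed
  qed
  have "exp_potential l n x' \<le> (\<Sum>i<n. exp (2 * l) + exp (- (l * e)) * exp (l * x i))"
    unfolding exp_potential_def using cup by (intro sum_mono) auto
  also have "\<dots> = real n * exp (2 * l) + exp (- (l * e)) * exp_potential l n x"
    by (simp add: exp_potential_def sum.distrib sum_distrib_left)
  finally show ?thesis .
qed

lemma exp_potential_round_invariant:
  fixes e :: real
  assumes e: "0 < e" "e \<le> 1"
    and fill: "valid_fill n p a" and greedy: "greedy_set n (\<lambda>i. x i + a i) p S"
    and x': "\<forall>i<n. x' i = (if i \<in> S then max 0 (x i + a i - (1 + e)) else x i + a i)"
    and bound: "exp_potential (e / 4) n x \<le> 24 * real n / e\<^sup>2"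
  shows "exp_potential (e / 4) n x' \<le> 24 * real n / e\<^sup>2"
proof (cases "\<forall>i\<in>S. 1 + e \<le> x i + a i")
  case True
  have rate: "e / 4 * (1 + e) \<le> e / 2" using e by (simp add: field_simps)
  have "exp_potential (e / 4) n x' \<le> exp_potential (e / 4) n x"
    using exp_potential_saturated_round[OF _ rate _ _ fill greedy x' True] e by simp
  with bound show ?thesis by linarith
next
  case False
  then obtain i\<^sub>0 where "i\<^sub>0 \<in> S" "x i\<^sub>0 + a i\<^sub>0 < 1 + e" by (auto simp: not_le)
  with exp_potential_unsaturated_round[of "e / 4" e, OF _ _ fill greedy x'] e
  have "exp_potential (e / 4) n x' \<le> real n * exp (e / 2) + exp (- (e\<^sup>2 / 4)) * exp_potential (e / 4) n x"
    by (simp add: power2_eq_square)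
  also have "\<dots> \<le> real n * 3 + exp (- (e\<^sup>2 / 4)) * (24 * real n / e\<^sup>2)"
  proof (intro add_mono mult_left_mono)
    have "exp (e / 2) \<le> exp 1" using e by simp
    then show "exp (e / 2) \<le> 3" using exp_le by linarith
  qed (use bound in auto)
  also have "\<dots> \<le> 24 * real n / e\<^sup>2"
  proof -
    have "e\<^sup>2 \<le> 1" using e by (simp add: power_le_one)
    then have "e\<^sup>2 / 8 \<le> 1 - exp (- (e\<^sup>2 / 4))"
      using half_le_one_minus_exp_minus[of "e\<^sup>2 / 4"] by simp
    then have "(e\<^sup>2 / 8) * (24 * real n / e\<^sup>2) \<le> (1 - exp (- (e\<^sup>2 / 4))) * (24 * real n / e\<^sup>2)"
      by (intro mult_right_mono) auto
    moreover have "(e\<^sup>2 / 8) * (24 * real n / e\<^sup>2) = real n * 3" using e by (simp add: field_simps)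
    moreover have "(1 - exp (- (e\<^sup>2 / 4))) * (24 * real n / e\<^sup>2)
        = 24 * real n / e\<^sup>2 - exp (- (e\<^sup>2 / 4)) * (24 * real n / e\<^sup>2)"
      by (simp add: left_diff_distrib diff_divide_distrib)
    ultimately show ?thesis by linarith
  qed
  finally show ?thesis .
qed

lemma greedy_play_exp_potential_bound:
  fixes e :: real
  assumes e: "0 < e" "e \<le> 1" and play: "greedy_play n e x"
  shows "exp_potential (e / 4) n (x t) \<le> 24 * real n / e\<^sup>2"
proof (induction t)
  case 0
  have "exp_potential (e / 4) n (x 0) = real n"
    using play by (simp add: exp_potential_def greedy_play_def)
  also have "\<dots> \<le> 24 * real n / e\<^sup>2"
    using e power_le_one[of e 2] by (simp add: field_simps mult_left_mono)
  finally show ?case .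
next
  case (Suc t)
  from play obtain p a S where "valid_fill n p a" "greedy_set n (\<lambda>i. x t i + a i) p S"
    "\<forall>i<n. x (Suc t) i = (if i \<in> S then max 0 (x t i + a i - (1 + e)) else x t i + a i)"
    unfolding greedy_play_def by blast
  from exp_potential_round_invariant[OF e this Suc] show ?case .
qed

lemma greedy_play_backlog_bound:
  fixes e :: real
  assumes e: "0 < e" "e \<le> 1" and play: "greedy_play n e x"
    and n: "3 \<le> n" "1 \<le> real n * e" and i: "i < n"
  shows "x t i \<le> 24 * ln (real n) / e"
proof -
  have "exp (e / 4 * x t i) \<le> exp_potential (e / 4) n (x t)"
    unfolding exp_potential_def using i by (intro member_le_sum) auto
  also have "\<dots> \<le> 24 * real n / e\<^sup>2"
    by (rule greedy_play_exp_potential_bound[OF e play])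
  also have "\<dots> = 24 * real n * (1 / e\<^sup>2)" by simp
  also have "\<dots> \<le> real n ^ 3 * real n * real n ^ 2"
  proof (intro mult_mono)
    have "(24::real) \<le> 3 ^ 3" by simp
    also have "\<dots> \<le> real n ^ 3" using n by (intro power_mono) auto
    finally show "24 \<le> real n ^ 3" .
    have "1 / e\<^sup>2 = (1 / e)\<^sup>2" by (simp add: power_divide)
    also have "\<dots> \<le> real n ^ 2" using n e by (intro power_mono) (auto simp: field_simps)
    finally show "1 / e\<^sup>2 \<le> real n ^ 2" .
  qed auto
  also have "\<dots> = exp (ln (real n)) ^ 6"
    using n by (simp add: eval_nat_numeral)
  also have "\<dots> = exp (6 * ln (real n))"
    using exp_of_nat_mult[of 6 "ln (real n)"] by simp
  finally have "e / 4 * x t i \<le> 6 * ln (real n)" by simp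
  then show ?thesis using e by (simp add: field_simps)
qed

theorem theorem7p1:
  shows "\<exists>C>0. \<forall>eps :: nat \<Rightarrow> real.
     (\<forall>n. eps n \<le> 1) \<and> filterlim (\<lambda>n. real n * eps n) at_top sequentially \<longrightarrow>
     (\<forall>\<^sub>F n in sequentially. \<forall>x. greedy_play n (eps n) x \<longrightarrow>
        (\<forall>t. \<forall>i<n. x t i \<le> C * ln (real n) / eps n))"
proof (intro exI[of _ 24] conjI allI impI)
  fix eps :: "nat \<Rightarrow> real"
  assume eps: "(\<forall>n. eps n \<le> 1) \<and> filterlim (\<lambda>n. real n * eps n) at_top sequentially"
  then have "\<forall>\<^sub>F n in sequentially. 1 \<le> real n * eps n"
    by (simp add: filterlim_at_top)
  moreover have "\<forall>\<^sub>F n in sequentially. 3 \<le> n" by (rule eventually_ge_at_top)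
  ultimately show "\<forall>\<^sub>F n in sequentially. \<forall>x. greedy_play n (eps n) x \<longrightarrow>
        (\<forall>t. \<forall>i<n. x t i \<le> 24 * ln (real n) / eps n)"
  proof eventually_elim
    case (elim n)
    then have "0 < eps n" by (smt (verit) mult_nonneg_nonpos of_nat_0_le_iff)
    with eps elim show ?case using greedy_play_backlog_bound by blast
  qed
qed simp

end
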